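(* Let ${\mathscr X}$ be a Hausdorff space and consider the set $M^1({\mathscr X})$ of Radon probability measures on ${\mathscr X}$ with the weak topology; assume $M^1({\mathscr X})$ is Hausdorff and that $P\mapsto P(A)$ is Borel measurable on $M^1({\mathscr X})$ for every Borel $A\subset{\mathscr X}$. Let $\Pi$ be a Borel probability measure on $M^1({\mathscr X})$ and let $G$ be its mean measure. Then $\{P\in M^1({\mathscr X}):P\ll G\}$ is closed in $M^1({\mathscr X})$ and the (weak) support of $\Pi$ satisfies $${\mathrm{supp}}(\Pi)\subset\{P\in M^1({\mathscr X}):P\ll G\}.$$
   Context: The weak topology on $M^1({\mathscr X})$ is the coarsest topology making $P\mapsto\int h\,dP$ continuous for every bounded Borel measurable $h:{\mathscr X}\to\mathbb{R}$. The mean measure of $\Pi$ is the Borel probability measure $G(A)=\int_{M^1({\mathscr X})}P(A)\,d\Pi(P)$. The support of $\Pi$ is the set of $P$ all of whose open neighbourhoods have positive $\Pi$-mass. *)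

theory Defs
  imports "HOL-Probability.Probability"
begin

definition radon_prob :: "'a::topological_space measure \<Rightarrow> bool" where
  "radon_prob P \<longleftrightarrow> prob_space P \<and> sets P = sets borel \<and>
     (\<forall>A\<in>sets borel. emeasure P A = (SUP K\<in>{K. compact K \<and> K \<subseteq> A}. emeasure P K))"

definition M1 :: "'a::topological_space measure set" where
  "M1 = {P. radon_prob P}"

definition weak_top :: "'a::topological_space measure topology" where
  "weak_top = topology_generated_by
     {{P \<in> M1. (\<integral>x. h x \<partial>P) \<in> U} | (h :: 'a \<Rightarrow> real) U.
        h \<in> borel_measurable borel \<and> bounded (range h) \<and> open U}"

definition borel_of :: "'b topology \<Rightarrow> 'b measure" where
  "borel_of T = sigma (topspace T) {U. openin T U}"

definition mean_measure :: "'a::topological_space measure measure \<Rightarrow> 'a measure" where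
  "mean_measure Pi_m = measure_of UNIV (sets borel) (\<lambda>A. \<integral>\<^sup>+ P. emeasure P A \<partial>Pi_m)"

definition weak_support :: "'a::topological_space measure measure \<Rightarrow> 'a measure set" where
  "weak_support Pi_m = {P \<in> topspace weak_top.
      \<forall>U. openin weak_top U \<and> P \<in> U \<longrightarrow> emeasure Pi_m U > 0}"

end

theory Submission
  imports Defs
begin

text \<open>P is absolutely continuous with respect to G iff P(A) = 0 for every Borel A with
  G(A) = 0. For each such A the set {P. P(A) > 0} is weakly open (test with the indicator
  of A), so the complement of {P. P << G} is a union of open sets. For the mean measure,
  G(A) = 0 forces P(A) = 0 for Pi-almost every P, so these open sets are Pi-null and miss
  the support.\<close>

lemma M1_prob_space: "P \<in> M1 \<Longrightarrow> prob_space P"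
  by (simp add: M1_def radon_prob_def)

lemma M1_sets_eq: "P \<in> M1 \<Longrightarrow> sets P = sets borel"
  by (simp add: M1_def radon_prob_def)

lemma topspace_weak_top: "topspace (weak_top :: 'a::topological_space measure topology) = M1"
proof -
  let ?S = "{{P \<in> M1. (\<integral>x. h x \<partial>P) \<in> U} | (h :: 'a \<Rightarrow> real) U.
        h \<in> borel_measurable borel \<and> bounded (range h) \<and> open U}"
  have "(M1::'a measure set) \<in> ?S"
    by (rule CollectI, rule exI[of _ "\<lambda>_. 0::real"], rule exI[of _ UNIV]) simp
  then have "\<Union>?S = M1" by blast
  then show ?thesis unfolding weak_top_def by simp
qed

lemma openin_weak_top_emeasure_neq_0:
  assumes "A \<in> sets borel"
  shows "openin weak_top {P \<in> (M1::'a::topological_space measure set). emeasure P A \<noteq> 0}"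
proof -
  have "{P \<in> (M1::'a measure set). emeasure P A \<noteq> 0}
      = {P \<in> M1. (\<integral>x. indicator A x \<partial>P) \<in> {0::real<..}}"
  proof (intro Collect_cong conj_cong refl)
    fix P :: "'a measure"
    assume P: "P \<in> M1"
    interpret prob_space P using P by (rule M1_prob_space)
    have "A \<in> sets P" using assms M1_sets_eq[OF P] by simp
    then show "emeasure P A \<noteq> 0 \<longleftrightarrow> (\<integral>x. indicator A x \<partial>P) \<in> {0::real<..}"
      by (simp add: emeasure_eq_measure less_le)
  qed
  moreover have "bounded (range (indicator A :: 'a \<Rightarrow> real))"
    by (rule boundedI[where B=1]) (auto simp: indicator_def)
  ultimately show ?thesis
    using assms unfolding weak_top_def
    by (intro topology_generated_by_Basis CollectI exI[of _ "indicator A"]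
        exI[of _ "{0::real<..}"]) simp
qed

lemma absolutely_continuous_iff_emeasure:
  assumes "sets G = sets borel" and "P \<in> M1"
  shows "absolutely_continuous G P \<longleftrightarrow>
    (\<forall>A\<in>sets borel. emeasure G A = 0 \<longrightarrow> emeasure P A = 0)"
  unfolding absolutely_continuous_def null_sets_def assms(1) M1_sets_eq[OF assms(2)] by auto

lemma closedin_weak_top_absolutely_continuous:
  fixes G :: "'a::topological_space measure"
  assumes G: "sets G = sets borel"
  shows "closedin weak_top {P \<in> M1. absolutely_continuous G P}"
proof -
  let ?N = "{A \<in> sets borel. emeasure G A = 0}"
  have "M1 - {P \<in> M1. absolutely_continuous G P}
      = (\<Union>A\<in>?N. {P \<in> M1. emeasure P A \<noteq> 0})"
    using absolutely_continuous_iff_emeasure[OF G] by blast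
  moreover have "openin weak_top (\<Union>A\<in>?N. {P \<in> M1. emeasure P A \<noteq> 0})"
    by (intro openin_Union) (auto intro: openin_weak_top_emeasure_neq_0)
  ultimately show ?thesis
    unfolding closedin_def topspace_weak_top by auto
qed

lemma sets_mean_measure: "sets (mean_measure Pi_m) = sets borel"
  unfolding mean_measure_def
  by (simp add: sets_measure_of_conv sets.sigma_sets_eq[of borel, simplified])

lemma space_eq_M1_if_sets_weak_borel:
  assumes "sets Pi_m = sets (borel_of (weak_top :: 'a::topological_space measure topology))"
  shows "space Pi_m = M1"
proof -
  have "space Pi_m = space (borel_of (weak_top :: 'a measure topology))"
    using sets_eq_imp_space_eq[OF assms] .
  also have "\<dots> = M1"
    unfolding borel_of_def by (simp add: space_measure_of_conv topspace_weak_top)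
  finally show ?thesis .
qed

lemma emeasure_mean_measure:
  fixes Pi_m :: "'a::topological_space measure measure"
  assumes meas: "\<And>A. A \<in> sets borel \<Longrightarrow> (\<lambda>P. emeasure P A) \<in> borel_measurable Pi_m"
    and M1: "space Pi_m = M1"
    and A: "A \<in> sets borel"
  shows "emeasure (mean_measure Pi_m) A = (\<integral>\<^sup>+ P. emeasure P A \<partial>Pi_m)"
  unfolding mean_measure_def
proof (rule emeasure_measure_of_sigma[OF _ _ _ A])
  show "sigma_algebra UNIV (sets (borel :: 'a measure))"
    using sets.sigma_algebra_axioms[of "borel :: 'a measure"] by simp
  show "positive (sets borel) (\<lambda>A. \<integral>\<^sup>+ P. emeasure P A \<partial>Pi_m)"
    by (simp add: positive_def)
  show "countably_additive (sets borel) (\<lambda>A. \<integral>\<^sup>+ P. emeasure P A \<partial>Pi_m)"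
    unfolding countably_additive_def
  proof (intro allI impI)
    fix F :: "nat \<Rightarrow> 'a set"
    assume F: "range F \<subseteq> sets borel" "disjoint_family F"
    have "(\<Sum>i. \<integral>\<^sup>+ P. emeasure P (F i) \<partial>Pi_m) = (\<integral>\<^sup>+ P. (\<Sum>i. emeasure P (F i)) \<partial>Pi_m)"
      using F meas by (intro nn_integral_suminf[symmetric]) auto
    also have "\<dots> = (\<integral>\<^sup>+ P. emeasure P (\<Union> (range F)) \<partial>Pi_m)"
      using F M1 M1_sets_eq by (intro nn_integral_cong suminf_emeasure) auto
    finally show "(\<Sum>i. \<integral>\<^sup>+ P. emeasure P (F i) \<partial>Pi_m) = (\<integral>\<^sup>+ P. emeasure P (\<Union> (range F)) \<partial>Pi_m)" .
  qed
qed

lemma weak_support_disjoint_null_open: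
  assumes "openin weak_top U" and "emeasure Pi_m U = 0"
  shows "weak_support Pi_m \<inter> U = {}"
  using assms unfolding weak_support_def by auto

lemma weak_support_absolutely_continuous:
  fixes Pi_m :: "'a::topological_space measure measure"
  assumes meas: "\<And>A. A \<in> sets borel \<Longrightarrow> (\<lambda>P. emeasure P A) \<in> borel_measurable Pi_m"
    and M1: "space Pi_m = M1"
  shows "weak_support Pi_m \<subseteq> {P \<in> M1. absolutely_continuous (mean_measure Pi_m) P}"
proof
  fix P assume P: "P \<in> weak_support Pi_m"
  then have "P \<in> M1" by (simp add: weak_support_def topspace_weak_top)
  moreover have "emeasure P A = 0"
    if A: "A \<in> sets borel" and GA: "emeasure (mean_measure Pi_m) A = 0" for A
  proof -
    have "(\<integral>\<^sup>+ Q. emeasure Q A \<partial>Pi_m) = 0"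
      using GA emeasure_mean_measure[OF meas M1 A] by simp
    then have "emeasure Pi_m {Q \<in> M1. emeasure Q A \<noteq> 0} = 0"
      using nn_integral_0_iff[OF meas[OF A]] M1 by simp
    then have "weak_support Pi_m \<inter> {Q \<in> M1. emeasure Q A \<noteq> 0} = {}"
      by (intro weak_support_disjoint_null_open openin_weak_top_emeasure_neq_0 A)
    with P \<open>P \<in> M1\<close> show ?thesis by blast
  qed
  ultimately show "P \<in> {P \<in> M1. absolutely_continuous (mean_measure Pi_m) P}"
    using absolutely_continuous_iff_emeasure[OF sets_mean_measure] by blast
qed

theorem mainTheorem4:
  fixes Pi_m :: "('a::t2_space) measure measure"
  assumes "Hausdorff_space (weak_top :: 'a measure topology)"
    and "\<And>A. A \<in> sets borel \<Longrightarrow> (\<lambda>P. emeasure P A) \<in> borel_measurable (borel_of (weak_top :: 'a measure topology))"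
    and "prob_space Pi_m"
    and "sets Pi_m = sets (borel_of (weak_top :: 'a measure topology))"
  shows "closedin weak_top {P \<in> M1. absolutely_continuous (mean_measure Pi_m) P}
     \<and> weak_support Pi_m \<subseteq> {P \<in> M1. absolutely_continuous (mean_measure Pi_m) P}"
proof
  show "closedin weak_top {P \<in> M1. absolutely_continuous (mean_measure Pi_m) P}"
    by (rule closedin_weak_top_absolutely_continuous[OF sets_mean_measure])
  have "(\<lambda>P. emeasure P A) \<in> borel_measurable Pi_m" if "A \<in> sets borel" for A
    using assms(2)[OF that] unfolding measurable_cong_sets[OF assms(4) refl] .
  then show "weak_support Pi_m \<subseteq> {P \<in> M1. absolutely_continuous (mean_measure Pi_m) P}"
    by (rule weak_support_absolutely_continuous[OF _ space_eq_M1_if_sets_weak_borel[OF assms(4)]])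
qed

end
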